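(* Let $N\in\mathbb{N}$ with $N\ge3$ and $\phi(x):=\cot\left(\frac{\pi}{2}\left(\frac{x}{\sqrt6}+\frac12\right)\right)$. There is an odd polynomial $P_{\mathrm{odd}}$ such that for all real $x$ with $|x|\le\frac12$, \[ \left|\phi(x)-\sum_{m=0}^{N+1}\frac{\phi^{(2m)}(0)}{(2m)!}x^{2m}-P_{\mathrm{odd}}(x)\right|\le 2.3\left(\frac23\right)^{N+2}x^{2N+4}. \] *)

theory Defs
  imports "HOL-Analysis.Analysis" "HOL-Computational_Algebra.Polynomial"
begin

definition phi :: "real \<Rightarrow> real" where
  "phi x = cot (pi / 2 * (x / sqrt 6 + 1 / 2))"

definition odd_poly :: "real poly \<Rightarrow> bool" where
  "odd_poly P \<longleftrightarrow> (\<forall>k. even k \<longrightarrow> coeff P k = 0)"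

end

theory Submission
  imports Defs
begin

text \<open>
  With \<open>\<rho> = 1/(2 sqrt 6)\<close> one has \<open>\<phi> x = cot (\<pi> (1/4 + \<rho> x))\<close>, so the reflection formula
  \<open>\<pi> cot (\<pi> u) = \<psi>(1 - u) - \<psi>(u)\<close> expresses the \<open>n\<close>-th derivative of \<open>\<phi>\<close> through the \<open>n\<close>-th
  polygamma function \<open>\<psi>\<^sub>n\<close> at \<open>1/4 + \<rho> x\<close> and \<open>3/4 - \<rho> x\<close>. Its series gives
  \<open>|\<psi>\<^sub>n(q)| \<le> n! (1 + q) / q\<^sup>n\<^sup>+\<^sup>1\<close>, so the Taylor coefficients of \<open>\<phi>\<close> at 0 are at most
  \<open>1.6 (4\<rho>)\<^sup>n\<close>, where \<open>(4\<rho>)\<^sup>2 = 2/3\<close>. For \<open>P\<^sub>o\<^sub>d\<^sub>d\<close> take the odd part of the Taylor polynomial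
  of degree \<open>8(N + 2)\<close>: the omitted even terms form a geometric tail of ratio \<open>2x\<^sup>2/3 \<le> 1/6\<close>,
  and the Lagrange remainder is negligible because its order is four times the exponent \<open>2N + 4\<close>
  of the error bound.
\<close>

lemma Digamma_reflection_complex:
  fixes z :: complex
  assumes "z \<notin> \<int>"
  shows "Digamma (1 - z) - Digamma z = of_real pi * cot (of_real pi * z)"
proof -
  \<comment> \<open>Differentiate the reflection formula \<open>\<Gamma>(t) \<Gamma>(1 - t) sin (\<pi> t) = \<pi>\<close>, valid off the integers.\<close>
  let ?g = "\<lambda>t. Gamma t * Gamma (1 - t) * sin (of_real pi * t)"
  let ?g' = "Gamma z * Gamma (1 - z) *
    ((Digamma z - Digamma (1 - z)) * sin (of_real pi * z) + cos (of_real pi * z) * of_real pi)"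
  have nonpos: "z \<notin> \<int>\<^sub>\<le>\<^sub>0" "1 - z \<notin> \<int>\<^sub>\<le>\<^sub>0"
    using assms Ints_diff[of 1 "1 - z"] nonpos_Ints_subset_Ints by auto
  have "(?g has_field_derivative ?g') (at z)"
    using nonpos by (auto intro!: derivative_eq_intros simp: algebra_simps)
  moreover have "open (- \<int> :: complex set)"
    by (simp add: open_Compl)
  moreover have "z \<in> - \<int>"
    using assms by simp
  moreover have "?g t = of_real pi" if "t \<in> - \<int>" for t :: complex
  proof -
    have "sin (of_real pi * t) \<noteq> 0"
      using that by (subst sin_eq_0) auto
    then show ?thesis
      using Gamma_reflection_complex[of t] by (simp add: field_simps)
  qed
  ultimately have "((\<lambda>_. of_real pi) has_field_derivative ?g') (at z)"
    by (rule has_field_derivative_transform_within_open)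
  then have "?g' = 0"
    using DERIV_unique DERIV_const by blast
  moreover have "Gamma z \<noteq> 0" "Gamma (1 - z) \<noteq> 0"
    using nonpos by (auto simp: Gamma_eq_zero_iff)
  ultimately have "(Digamma z - Digamma (1 - z)) * sin (of_real pi * z) + cos (of_real pi * z) * of_real pi = 0"
    by simp
  moreover have "sin (of_real pi * z) \<noteq> 0"
    using assms by (subst sin_eq_0) auto
  ultimately show ?thesis
    by (simp add: cot_def field_simps)
qed

lemma Digamma_reflection_real:
  fixes u :: real
  assumes "u \<notin> \<int>"
  shows "Digamma (1 - u) - Digamma u = pi * cot (pi * u)"
proof -
  have "u \<noteq> 0" "1 - u \<noteq> 0"
    using assms by auto
  have "Digamma (complex_of_real u) = of_real (Digamma u)"
    using \<open>u \<noteq> 0\<close> by (rule Polygamma_of_real)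
  moreover have "Digamma (complex_of_real (1 - u)) = of_real (Digamma (1 - u))"
    using \<open>1 - u \<noteq> 0\<close> by (rule Polygamma_of_real)
  ultimately have "complex_of_real (Digamma (1 - u) - Digamma u) = Digamma (1 - of_real u) - Digamma (of_real u)"
    by simp
  also have "\<dots> = of_real (pi * cot (pi * u))"
    using assms by (simp add: Digamma_reflection_complex cot_of_real)
  finally show ?thesis
    by (simp only: of_real_eq_iff)
qed

definition rho :: real where
  "rho = 1 / (2 * sqrt 6)"

lemma rho_pos: "0 < rho"
  by (simp add: rho_def)

lemma four_rho_squared: "(4 * rho)\<^sup>2 = 2 / 3"
  by (simp add: rho_def power2_eq_square field_simps)

lemma four_rho_less_one: "4 * rho < 1"
  by (rule power2_less_imp_less) (use four_rho_squared in auto)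

lemma phi_altdef: "phi x = cot (pi * (1/4 + rho * x))"
  unfolding phi_def rho_def by (simp add: field_simps)

definition phi_deriv :: "nat \<Rightarrow> real \<Rightarrow> real" where
  "phi_deriv n x =
     rho ^ n / pi * ((-1) ^ n * Polygamma n (3/4 - rho * x) - Polygamma n (1/4 + rho * x))"

lemma phi_Polygamma_args_pos:
  assumes "\<bar>x\<bar> < 1"
  shows "0 < 1/4 + rho * x" "0 < 3/4 - rho * x"
proof -
  have "\<bar>rho * x\<bar> = rho * \<bar>x\<bar>"
    using rho_pos by (simp add: abs_mult)
  also have "\<dots> < rho"
    using mult_strict_left_mono[OF assms rho_pos] by simp
  also have "\<dots> < 1/4"
    using four_rho_less_one by simp
  finally have "\<bar>rho * x\<bar> < 1/4" .
  then show "0 < 1/4 + rho * x" "0 < 3/4 - rho * x"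
    by auto
qed

lemma has_real_derivative_phi_deriv:
  assumes "\<bar>x\<bar> < 1"
  shows "(phi_deriv n has_real_derivative phi_deriv (Suc n) x) (at x)"
proof -
  have "3/4 - rho * x \<notin> \<int>\<^sub>\<le>\<^sub>0" "1/4 + rho * x \<notin> \<int>\<^sub>\<le>\<^sub>0"
    using phi_Polygamma_args_pos[OF assms] by (auto elim!: nonpos_Ints_cases)
  then show ?thesis
    unfolding phi_deriv_def [abs_def] by (auto intro!: derivative_eq_intros simp: algebra_simps)
qed

lemma phi_eq_phi_deriv_0:
  assumes "\<bar>x\<bar> < 1"
  shows "phi x = phi_deriv 0 x"
proof -
  have "frac (1/4 + rho * x) = 1/4 + rho * x"
    using phi_Polygamma_args_pos[OF assms] by (simp add: frac_eq)
  then have "1/4 + rho * x \<notin> \<int>"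
    using phi_Polygamma_args_pos[OF assms] by (simp flip: frac_gt_0_iff)
  then show ?thesis
    using Digamma_reflection_real[of "1/4 + rho * x"] by (simp add: phi_altdef phi_deriv_def)
qed

lemma open_abs_less_one: "open {y :: real. \<bar>y\<bar> < 1}"
  by (intro open_Collect_less continuous_intros)

lemma higher_deriv_phi:
  assumes "\<bar>x\<bar> < 1"
  shows "(deriv ^^ n) phi x = phi_deriv n x"
  using assms
proof (induction n arbitrary: x)
  case 0
  then show ?case
    by (simp add: phi_eq_phi_deriv_0)
next
  case (Suc n)
  have "eventually (\<lambda>y. y \<in> {y. \<bar>y\<bar> < 1}) (nhds x)"
    using eventually_nhds_in_open[OF open_abs_less_one] Suc.prems by simp
  then have "eventually (\<lambda>y. (deriv ^^ n) phi y = phi_deriv n y) (nhds x)"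
    by (rule eventually_mono) (simp add: Suc.IH)
  then have "deriv ((deriv ^^ n) phi) x = deriv (phi_deriv n) x"
    by (rule deriv_cong_ev) simp
  also have "\<dots> = phi_deriv (Suc n) x"
    by (rule DERIV_imp_deriv[OF has_real_derivative_phi_deriv[OF Suc.prems]])
  finally show ?case
    by simp
qed

lemma has_real_derivative_higher_deriv_phi:
  assumes "\<bar>x\<bar> < 1"
  shows "((deriv ^^ n) phi has_real_derivative (deriv ^^ Suc n) phi x) (at x)"
proof -
  have "((deriv ^^ n) phi has_real_derivative phi_deriv (Suc n) x) (at x)"
    by (rule has_field_derivative_transform_within_open[OF has_real_derivative_phi_deriv[OF assms]
          open_abs_less_one]) (simp_all add: assms higher_deriv_phi)
  then show ?thesis
    unfolding higher_deriv_phi[OF assms] .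
qed

lemma suminf_inverse_power_le:
  fixes q :: real
  assumes q: "0 < q"
  shows "(\<Sum>k. inverse ((q + of_nat k) ^ Suc (Suc m))) \<le> inverse (q ^ Suc (Suc m)) + inverse (q ^ Suc m)"
proof -
  \<comment> \<open>Beyond the first term, compare with the telescoping series of \<open>q\<^sup>-\<^sup>m (1/(q+k) - 1/(q+k+1))\<close>.\<close>
  define f where "f k = inverse ((q + of_nat k) ^ Suc (Suc m))" for k :: nat
  define h where "h k = inverse (q ^ m) * inverse (q + of_nat k)" for k :: nat
  have f: "summable f"
    unfolding f_def using q by (intro Polygamma_converges') auto
  have "h \<longlonglongrightarrow> 0"
    unfolding h_def by (intro tendsto_mult_right_zero tendsto_inverse_0_at_top
        filterlim_tendsto_add_at_top[OF tendsto_const] filterlim_real_sequentially)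
  then have h: "(\<lambda>k. h k - h (Suc k)) sums h 0"
    using telescope_sums'[of h 0] by simp
  have le: "f (Suc k) \<le> h k - h (Suc k)" for k
  proof -
    define a where "a = q + of_nat k"
    have a: "q \<le> a" "0 < a"
      using q by (auto simp: a_def)
    have "q ^ m * (a * (a + 1)) \<le> (a + 1) ^ m * ((a + 1) * (a + 1))"
      using a q by (intro mult_mono power_mono) auto
    also have "\<dots> = (a + 1) ^ Suc (Suc m)"
      by (simp add: algebra_simps)
    finally have "inverse ((a + 1) ^ Suc (Suc m)) \<le> inverse (q ^ m * (a * (a + 1)))"
      using a q by (intro le_imp_inverse_le) auto
    also have "\<dots> = inverse (q ^ m) * (inverse a - inverse (a + 1))"
      using a by (simp add: inverse_mult_distrib field_simps)
    also have "\<dots> = h k - h (Suc k)"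
      by (simp add: h_def a_def algebra_simps)
    finally show ?thesis
      by (simp add: f_def a_def add_ac)
  qed
  have "summable (\<lambda>k. f (Suc k))"
    using f by (simp add: summable_Suc_iff)
  then have "(\<Sum>k. f (Suc k)) \<le> h 0"
    by (rule sums_le[OF le summable_sums h])
  moreover have "f 0 = inverse (q ^ Suc (Suc m))" "h 0 = inverse (q ^ Suc m)"
    by (simp_all add: f_def h_def)
  ultimately have "suminf f \<le> inverse (q ^ Suc (Suc m)) + inverse (q ^ Suc m)"
    using suminf_split_head[OF f] by simp
  then show ?thesis
    unfolding f_def [abs_def] .
qed

lemma abs_Polygamma_le:
  fixes q w :: real
  assumes "0 < w" "w \<le> q" "1 \<le> n"
  shows "\<bar>Polygamma n q\<bar> \<le> fact n * (1 + w) / w ^ Suc n"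
proof -
  obtain m where n: "n = Suc m"
    using assms(3) by (cases n) auto
  have q: "0 < q"
    using assms by linarith
  have "0 \<le> (\<Sum>k. inverse ((q + of_nat k) ^ Suc n))"
    using q assms(3) by (intro suminf_nonneg Polygamma_converges') auto
  then have "\<bar>Polygamma n q\<bar> = fact n * (\<Sum>k. inverse ((q + of_nat k) ^ Suc n))"
    using n by (simp add: Polygamma_def abs_mult)
  also have "\<dots> \<le> fact n * (inverse (q ^ Suc n) + inverse (q ^ n))"
    using suminf_inverse_power_le[OF q, of m] n by (intro mult_left_mono) auto
  also have "\<dots> \<le> fact n * (inverse (w ^ Suc n) + inverse (w ^ n))"
    using assms by (intro mult_left_mono add_mono le_imp_inverse_le power_mono) auto
  also have "\<dots> = fact n * (1 + w) / w ^ Suc n"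
    using assms by (simp add: field_simps)
  finally show ?thesis .
qed

lemma abs_phi_deriv_le_Polygamma:
  "\<bar>phi_deriv n x\<bar> \<le> rho ^ n / pi * (\<bar>Polygamma n (3/4 - rho * x)\<bar> + \<bar>Polygamma n (1/4 + rho * x)\<bar>)"
proof -
  have triangle: "\<bar>(-1) ^ n * a - b\<bar> \<le> \<bar>a\<bar> + \<bar>b\<bar>" for a b :: real
    using abs_triangle_ineq4[of "(-1) ^ n * a" b] by (simp add: abs_mult power_abs)
  have "\<bar>phi_deriv n x\<bar> =
      rho ^ n / pi * \<bar>(-1) ^ n * Polygamma n (3/4 - rho * x) - Polygamma n (1/4 + rho * x)\<bar>"
    using rho_pos by (simp add: phi_deriv_def abs_mult)
  also have "\<dots> \<le> rho ^ n / pi * (\<bar>Polygamma n (3/4 - rho * x)\<bar> + \<bar>Polygamma n (1/4 + rho * x)\<bar>)"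
    using rho_pos by (intro mult_left_mono triangle) auto
  finally show ?thesis .
qed

lemma pi_gt_314: "157/50 < pi"
  using pi_approx by simp

lemma abs_phi_deriv_0_le:
  assumes "5 \<le> n"
  shows "\<bar>phi_deriv n 0\<bar> / fact n \<le> 8/5 * (4 * rho) ^ n"
proof -
  have "(1/3 :: real) ^ n \<le> (1/3) ^ 5"
    using assms by (intro power_decreasing) auto
  also have "\<dots> = 1/243"
    by (simp add: power_divide)
  finally have "5 + 7/3 * (1/3 :: real) ^ n \<le> 8/5 * pi"
    using pi_gt_314 by linarith
  then have const: "(5 + 7/3 * (1/3 :: real) ^ n) / pi \<le> 8/5"
    unfolding pos_divide_le_eq[OF pi_gt_zero] .
  have "fact n * (1 + 3/4) / (3/4 :: real) ^ Suc n = fact n * (7/3 * (1/3) ^ n * 4 ^ n)"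
    by (simp add: power_divide field_simps)
  then have bound_3_4: "\<bar>Polygamma n (3/4 :: real)\<bar> \<le> fact n * (7/3 * (1/3) ^ n * 4 ^ n)"
    using abs_Polygamma_le[of "3/4" "3/4" n] assms by simp
  have "fact n * (1 + 1/4) / (1/4 :: real) ^ Suc n = fact n * (5 * 4 ^ n)"
    by (simp add: power_divide field_simps)
  then have bound_1_4: "\<bar>Polygamma n (1/4 :: real)\<bar> \<le> fact n * (5 * 4 ^ n)"
    using abs_Polygamma_le[of "1/4" "1/4" n] assms by simp
  have "\<bar>phi_deriv n 0\<bar> \<le> rho ^ n / pi * (\<bar>Polygamma n (3/4 :: real)\<bar> + \<bar>Polygamma n (1/4 :: real)\<bar>)"
    using abs_phi_deriv_le_Polygamma[of n 0] by simp
  also have "\<dots> \<le> rho ^ n / pi * (fact n * (7/3 * (1/3) ^ n * 4 ^ n) + fact n * (5 * 4 ^ n))"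
    using bound_3_4 bound_1_4 rho_pos by (intro mult_left_mono add_mono) auto
  also have "\<dots> = fact n * (4 * rho) ^ n * ((5 + 7/3 * (1/3) ^ n) / pi)"
    by (simp add: power_mult_distrib field_simps)
  also have "\<dots> \<le> fact n * (4 * rho) ^ n * (8/5)"
    by (rule mult_left_mono[OF const]) (use rho_pos in simp)
  finally show ?thesis
    by (simp add: field_simps)
qed

lemma abs_phi_deriv_le:
  assumes "4 * rho * \<bar>t\<bar> \<le> s" "s \<le> 41/100" "1 \<le> n"
  shows "\<bar>phi_deriv n t\<bar> / fact n \<le> 5 * (4 * rho / (1 - s)) ^ n"
proof -
  define w where "w = (1 - s) / 4"
  have w: "59/400 \<le> w"
    using assms(2) by (simp add: w_def)
  have "2 * (1 + w) \<le> 5 * (157/50 * w)"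
    using w by (simp add: field_simps)
  also have "\<dots> \<le> 5 * (pi * w)"
    using w pi_gt_314 by (intro mult_left_mono mult_right_mono) auto
  finally have "2 * (1 + w) \<le> 5 * (pi * w)" .
  then have const: "2 * (1 + w) / (pi * w) \<le> 5"
    using w by (simp add: pos_divide_le_eq)
  have "\<bar>rho * t\<bar> \<le> s / 4"
    using assms(1) rho_pos by (simp add: abs_mult)
  then have "w \<le> 3/4 - rho * t" "w \<le> 1/4 + rho * t"
    by (auto simp: w_def abs_le_iff)
  then have "\<bar>phi_deriv n t\<bar> \<le> rho ^ n / pi * (fact n * (1 + w) / w ^ Suc n + fact n * (1 + w) / w ^ Suc n)"
    using abs_phi_deriv_le_Polygamma[of n t] w assms(3) rho_pos
    by (elim order_trans) (intro mult_left_mono add_mono abs_Polygamma_le; simp)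
  also have "\<dots> = fact n * (2 * (1 + w) / (pi * w)) * (rho / w) ^ n"
    using w by (simp add: power_divide field_simps)
  also have "\<dots> \<le> fact n * 5 * (rho / w) ^ n"
    using w rho_pos by (intro mult_right_mono mult_left_mono const) auto
  also have "rho / w = 4 * rho / (1 - s)"
    by (simp add: w_def)
  finally show ?thesis
    by (simp add: field_simps)
qed

lemma power_div_one_minus_le:
  fixes z :: real
  assumes "0 \<le> z" "z \<le> 41/100" "5 \<le> K"
  shows "(z / (1 - z)) ^ (8 * K) \<le> (z\<^sup>2) ^ K / 100"
proof -
  have "z ^ 6 \<le> (41/100) ^ 6" "(59/100) ^ 8 \<le> (1 - z) ^ 8"
    using assms by (auto intro: power_mono)
  then have "z ^ 6 / (1 - z) ^ 8 \<le> 1/3"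
    using assms by (simp add: field_simps)
  then have small: "(z ^ 6 / (1 - z) ^ 8) ^ K \<le> (1/3) ^ 5"
    using assms by (intro order_trans[OF power_mono power_decreasing]) auto
  have "(z / (1 - z)) ^ (8 * K) = (z\<^sup>2) ^ K * (z ^ 6 / (1 - z) ^ 8) ^ K"
    by (simp add: power_mult power_divide power_mult_distrib[symmetric] power_add[symmetric])
  also have "\<dots> \<le> (z\<^sup>2) ^ K * (1/3) ^ 5"
    using small by (intro mult_left_mono) auto
  also have "\<dots> \<le> (z\<^sup>2) ^ K * (1/100)"
    by (intro mult_left_mono) (auto simp: power_divide)
  finally show ?thesis
    by simp
qed

lemma sum_power_atLeastLessThan_le:
  fixes w :: "'a :: linordered_field"
  assumes "0 \<le> w" "w < 1"
  shows "(\<Sum>m\<in>{a..<b}. w ^ m) \<le> w ^ a / (1 - w)"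
proof (cases "a < b")
  case True
  then have "(1 - w) * (\<Sum>m\<in>{a..<b}. w ^ m) = w ^ a - w ^ b"
    using sum_gp_multiplied[of a "b - 1" w] by (simp add: atLeastLessThanSuc_atLeastAtMost[symmetric])
  then have "(1 - w) * (\<Sum>m\<in>{a..<b}. w ^ m) \<le> w ^ a"
    using assms by simp
  then show ?thesis
    using assms by (simp add: pos_le_divide_eq mult.commute)
next
  case False
  then show ?thesis
    using assms by simp
qed

lemma abs_phi_even_Taylor_term_le:
  fixes x :: real
  assumes "3 \<le> m"
  shows "\<bar>(deriv ^^ (2*m)) phi 0 / fact (2*m) * x ^ (2*m)\<bar> \<le> 8/5 * (2/3 * x\<^sup>2) ^ m"
proof -
  have "\<bar>(deriv ^^ (2*m)) phi 0 / fact (2*m) * x ^ (2*m)\<bar> = \<bar>phi_deriv (2*m) 0\<bar> / fact (2*m) * \<bar>x\<bar> ^ (2*m)"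
    using higher_deriv_phi[of 0 "2*m"] by (simp add: abs_mult power_abs)
  also have "\<dots> \<le> 8/5 * (4 * rho) ^ (2*m) * \<bar>x\<bar> ^ (2*m)"
    by (rule mult_right_mono[OF abs_phi_deriv_0_le]) (use assms in auto)
  also have "(4 * rho) ^ (2*m) = (2/3) ^ m"
    by (simp only: power_mult four_rho_squared)
  also have "\<bar>x\<bar> ^ (2*m) = (x\<^sup>2) ^ m"
    by (simp only: power_mult power2_abs)
  also have "8/5 * (2/3) ^ m * (x\<^sup>2) ^ m = 8/5 * (2/3 * x\<^sup>2) ^ m"
    by (simp only: power_mult_distrib mult.assoc)
  finally show ?thesis .
qed

lemma abs_phi_even_Taylor_tail_le:
  fixes x :: real
  assumes "3 \<le> K" "\<bar>x\<bar> \<le> 1/2"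
  shows "\<bar>\<Sum>m\<in>{K..<L}. (deriv ^^ (2*m)) phi 0 / fact (2*m) * x ^ (2*m)\<bar> \<le> 48/25 * (2/3 * x\<^sup>2) ^ K"
proof -
  define W where "W = 2/3 * x\<^sup>2"
  have "x\<^sup>2 \<le> 1/4"
    using power_mono[OF assms(2), of 2] by (simp add: power2_eq_square)
  then have W: "0 \<le> W" "W \<le> 1/6"
    by (simp_all add: W_def)
  have "\<bar>\<Sum>m\<in>{K..<L}. (deriv ^^ (2*m)) phi 0 / fact (2*m) * x ^ (2*m)\<bar> \<le> (\<Sum>m\<in>{K..<L}. 8/5 * W ^ m)"
  proof (rule order_trans[OF sum_abs sum_mono])
    fix m
    assume "m \<in> {K..<L}"
    then show "\<bar>(deriv ^^ (2*m)) phi 0 / fact (2*m) * x ^ (2*m)\<bar> \<le> 8/5 * W ^ m"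
      unfolding W_def using assms(1) by (intro abs_phi_even_Taylor_term_le) simp
  qed
  also have "\<dots> = 8/5 * (\<Sum>m\<in>{K..<L}. W ^ m)"
    by (rule sum_distrib_left[symmetric])
  also have "\<dots> \<le> 8/5 * (W ^ K / (1 - W))"
    using W by (intro mult_left_mono sum_power_atLeastLessThan_le) auto
  also have "\<dots> \<le> 8/5 * (W ^ K * (6/5))"
  proof -
    have "1 / (1 - W) \<le> 6/5"
      using W by (simp add: field_simps)
    then have "W ^ K * (1 / (1 - W)) \<le> W ^ K * (6/5)"
      using W by (intro mult_left_mono) auto
    then have "W ^ K / (1 - W) \<le> W ^ K * (6/5)"
      by simp
    then show ?thesis
      by (rule mult_left_mono) simp
  qed
  finally show ?thesis
    by (simp add: W_def)
qed

lemma abs_phi_Lagrange_remainder_le: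
  fixes t x :: real
  assumes "\<bar>t\<bar> \<le> \<bar>x\<bar>" "\<bar>x\<bar> \<le> 1/2" "5 \<le> K"
  shows "\<bar>(deriv ^^ (8*K)) phi t / fact (8*K) * x ^ (8*K)\<bar> \<le> (2/3 * x\<^sup>2) ^ K / 20"
proof -
  define z where "z = 4 * rho * \<bar>x\<bar>"
  have z2: "z\<^sup>2 = 2/3 * x\<^sup>2"
    using four_rho_squared by (simp add: z_def power_mult_distrib)
  have "x\<^sup>2 \<le> 1/4"
    using power_mono[OF assms(2), of 2] by (simp add: power2_eq_square)
  then have "z\<^sup>2 \<le> 1/6"
    using z2 by linarith
  moreover have "(1/6 :: real) \<le> (41/100)\<^sup>2"
    by (simp add: power2_eq_square)
  ultimately have "z\<^sup>2 \<le> (41/100)\<^sup>2"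
    by linarith
  then have z: "0 \<le> z" "z \<le> 41/100"
    using rho_pos by (auto simp: z_def intro: power2_le_imp_le)
  have "\<bar>(deriv ^^ (8*K)) phi t / fact (8*K) * x ^ (8*K)\<bar> = \<bar>phi_deriv (8*K) t\<bar> / fact (8*K) * \<bar>x\<bar> ^ (8*K)"
    using assms higher_deriv_phi[of t "8*K"] by (simp add: abs_mult power_abs)
  also have "\<dots> \<le> 5 * (4 * rho / (1 - z)) ^ (8*K) * \<bar>x\<bar> ^ (8*K)"
    using assms z rho_pos by (intro mult_right_mono abs_phi_deriv_le) (auto simp: z_def)
  also have "\<dots> = 5 * (z / (1 - z)) ^ (8*K)"
    by (simp add: z_def power_mult_distrib[symmetric])
  also have "\<dots> \<le> 5 * ((z\<^sup>2) ^ K / 100)"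
    using z assms by (intro mult_left_mono power_div_one_minus_le) auto
  finally show ?thesis
    by (simp add: z2)
qed

lemma phi_Maclaurin_even_odd:
  fixes x :: real
  assumes "\<bar>x\<bar> < 1"
  obtains t where "\<bar>t\<bar> \<le> \<bar>x\<bar>"
    "phi x = (\<Sum>m<L. (deriv ^^ (2*m)) phi 0 / fact (2*m) * x ^ (2*m))
           + (\<Sum>m<L. (deriv ^^ (2*m+1)) phi 0 / fact (2*m+1) * x ^ (2*m+1))
           + (deriv ^^ (2*L)) phi t / fact (2*L) * x ^ (2*L)"
proof -
  let ?a = "\<lambda>n. (deriv ^^ n) phi 0 / fact n * x ^ n"
  obtain t where "\<bar>t\<bar> \<le> \<bar>x\<bar>"
    "phi x = (\<Sum>n<2*L. ?a n) + (deriv ^^ (2*L)) phi t / fact (2*L) * x ^ (2*L)"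
    using Maclaurin_bi_le[of "\<lambda>n. (deriv ^^ n) phi" phi "2*L" x] assms
      has_real_derivative_higher_deriv_phi by fastforce
  moreover have "(\<Sum>n<2*L. ?a n) = (\<Sum>m<L. ?a (2*m)) + (\<Sum>m<L. ?a (2*m+1))"
    using sum_split_even_odd[where f = ?a and g = ?a and n = L] by simp
  ultimately show ?thesis
    using that by simp
qed

definition phi_odd_Taylor_poly :: "nat \<Rightarrow> real poly" where
  "phi_odd_Taylor_poly L = (\<Sum>m<L. monom ((deriv ^^ (2*m+1)) phi 0 / fact (2*m+1)) (2*m+1))"

lemma odd_poly_phi_odd_Taylor_poly: "odd_poly (phi_odd_Taylor_poly L)"
  unfolding odd_poly_def phi_odd_Taylor_poly_def by (auto simp: coeff_sum coeff_monom intro!: sum.neutral)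

lemma poly_phi_odd_Taylor_poly:
  fixes x :: real
  shows "poly (phi_odd_Taylor_poly L) x = (\<Sum>m<L. (deriv ^^ (2*m+1)) phi 0 / fact (2*m+1) * x ^ (2*m+1))"
  by (simp add: phi_odd_Taylor_poly_def poly_sum poly_monom)

lemma phi_Taylor_error_le:
  fixes x :: real
  assumes "5 \<le> K" "\<bar>x\<bar> \<le> 1/2"
  shows "\<bar>phi x - (\<Sum>m<K. (deriv ^^ (2*m)) phi 0 / fact (2*m) * x ^ (2*m))
            - poly (phi_odd_Taylor_poly (4*K)) x\<bar> \<le> 23/10 * (2/3 * x\<^sup>2) ^ K"
proof -
  let ?e = "\<lambda>m. (deriv ^^ (2*m)) phi 0 / fact (2*m) * x ^ (2*m)"
  let ?R = "\<lambda>t. (deriv ^^ (8*K)) phi t / fact (8*K) * x ^ (8*K)"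
  have "\<bar>x\<bar> < 1"
    using assms by simp
  then obtain t where t: "\<bar>t\<bar> \<le> \<bar>x\<bar>" and
    "phi x = (\<Sum>m<4*K. ?e m) + (\<Sum>m<4*K. (deriv ^^ (2*m+1)) phi 0 / fact (2*m+1) * x ^ (2*m+1))
           + (deriv ^^ (2*(4*K))) phi t / fact (2*(4*K)) * x ^ (2*(4*K))"
    by (rule phi_Maclaurin_even_odd)
  then have "phi x = (\<Sum>m<K. ?e m) + (\<Sum>m\<in>{K..<4*K}. ?e m) + poly (phi_odd_Taylor_poly (4*K)) x + ?R t"
    using assms(1) by (simp add: poly_phi_odd_Taylor_poly lessThan_atLeast0 sum.atLeastLessThan_concat)
  then have "\<bar>phi x - (\<Sum>m<K. ?e m) - poly (phi_odd_Taylor_poly (4*K)) x\<bar>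
      \<le> \<bar>\<Sum>m\<in>{K..<4*K}. ?e m\<bar> + \<bar>?R t\<bar>"
    by linarith
  also have "\<dots> \<le> 48/25 * (2/3 * x\<^sup>2) ^ K + (2/3 * x\<^sup>2) ^ K / 20"
    using assms t by (intro add_mono abs_phi_even_Taylor_tail_le abs_phi_Lagrange_remainder_le) auto
  also have "\<dots> \<le> 23/10 * (2/3 * x\<^sup>2) ^ K"
    using zero_le_power[of "2/3 * x\<^sup>2" K] by simp
  finally show ?thesis .
qed

theorem lemma3p4:
  fixes N :: nat
  assumes "N \<ge> 3"
  shows "\<exists>P. odd_poly P \<and>
    (\<forall>x::real. \<bar>x\<bar> \<le> 1/2 \<longrightarrow>
      \<bar>phi x - (\<Sum>m = 0..N+1. (deriv ^^ (2*m)) phi 0 / fact (2*m) * x ^ (2*m)) - poly P x\<bar>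
        \<le> 2.3 * (2/3) ^ (N+2) * x ^ (2*N+4))"
proof -
  have range: "{0..N+1} = {..<N+2}"
    by auto
  have bound: "2.3 * (2/3) ^ (N+2) * x ^ (2*N+4) = 23/10 * (2/3 * x\<^sup>2) ^ (N+2)" for x :: real
  proof -
    have "2*N+4 = 2*(N+2)"
      by simp
    then have "x ^ (2*N+4) = (x\<^sup>2) ^ (N+2)"
      by (simp only: power_mult)
    then show ?thesis
      unfolding power_mult_distrib by simp
  qed
  have "\<bar>phi x - (\<Sum>m<N+2. (deriv ^^ (2*m)) phi 0 / fact (2*m) * x ^ (2*m))
          - poly (phi_odd_Taylor_poly (4 * (N+2))) x\<bar> \<le> 23/10 * (2/3 * x\<^sup>2) ^ (N+2)"
    if "\<bar>x\<bar> \<le> 1/2" for x :: real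
    using assms that by (intro phi_Taylor_error_le) auto
  then show ?thesis
    unfolding range bound using odd_poly_phi_odd_Taylor_poly by blast
qed

end
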